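(* Let $b\in\mathbb{C}\setminus\{1\}$, and let $a_n(q)$ be the sequence of polynomials in $q$ defined recursively by \[ a_0(q)=0,\qquad a_n(q) = b^n + \left(1-q^{n-1}\right)a_{n-1}(q) \quad \text{for } n\in\mathbb{N}. \] Then, for $q\in\mathbb{C}$ with $|q|<\min(|b|^{-1},1)$, the limit below exists and \[ \lim_{n\rightarrow\infty}\left( \sum_{1\le\ell\le n} b^\ell - a_n(q)\right) =\lim_{n\rightarrow\infty}\left( \frac{b-b^{n+1}}{1-b} - a_n(q) \right) = \frac{b}{1-b} - \frac{b\,(q;q)_\infty}{(b;q)_\infty}. \]
   Context: For $n\in\mathbb{N}_0\cup\{\infty\}$, $(a;q)_n := \prod_{j=0}^{n-1}(1-aq^j)$. If $b=0$, interpret $|b|^{-1}=\infty$. *)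

theory Defs
  imports "HOL-Analysis.Analysis"
begin

definition qpoch :: "complex \<Rightarrow> complex \<Rightarrow> nat \<Rightarrow> complex" where
  "qpoch a q n = (\<Prod>j<n. 1 - a * q ^ j)"

definition qpoch_inf :: "complex \<Rightarrow> complex \<Rightarrow> complex" where
  "qpoch_inf a q = (\<Prod>j. 1 - a * q ^ j)"

fun aseq :: "complex \<Rightarrow> complex \<Rightarrow> nat \<Rightarrow> complex" where
  "aseq b q 0 = 0"
| "aseq b q (Suc n) = b ^ Suc n + (1 - q ^ n) * aseq b q n"

end

theory Submission
  imports Defs
begin

text \<open>The shifted sequence c(n) = a(n) + b^(n+1)/(1-b) satisfies
  c(n+1) = (1 - q^n) c(n) + b/(1-b) (bq)^n, and dividing by (q;q)(n) makes this recurrence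
  telescope: c(n+1) = b/(1-b) (q;q)(n) \<Sum>(m\<le>n) (bq)^m/(q;q)(m). Since |bq| < 1, Euler's identity
  \<Sum>(m) z^m/(q;q)(m) = 1/(z;q)(\<infinity>) gives the limit b (q;q)(\<infinity>) / ((1-b) (bq;q)(\<infinity>)),
  which is b (q;q)(\<infinity>) / (b;q)(\<infinity>). Euler's identity in turn follows from the functional
  equation e(qz) = (1-z) e(z) of the q-exponential series e, iterated to e(q^k z) = (z;q)(k) e(z),
  together with continuity of e at 0.\<close>

lemma qpoch_Suc: "qpoch a q (Suc n) = qpoch a q n * (1 - a * q ^ n)"
  by (simp add: qpoch_def)

lemma qpoch_Suc_shift: "qpoch a q (Suc n) = (1 - a) * qpoch (a * q) q n"
  unfolding qpoch_def by (subst prod.lessThan_Suc_shift) (simp add: mult.assoc)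

lemma convergent_prod_qpoch:
  fixes a q :: complex
  assumes "norm q < 1"
  shows "convergent_prod (\<lambda>j. 1 - a * q ^ j)"
proof -
  have "summable (\<lambda>j. norm a * norm q ^ j)"
    using assms by (intro summable_mult summable_geometric) auto
  then have "summable (\<lambda>j. norm ((1 - a * q ^ j) - 1))"
    by (simp add: norm_mult norm_power)
  then show ?thesis
    by (intro abs_convergent_prod_imp_convergent_prod summable_imp_abs_convergent_prod)
qed

lemma qpoch_tendsto_qpoch_inf:
  assumes "norm q < 1"
  shows "(\<lambda>n. qpoch a q n) \<longlonglongrightarrow> qpoch_inf a q"
proof -
  have "(\<lambda>n. qpoch a q (Suc n)) \<longlonglongrightarrow> qpoch_inf a q"
    using convergent_prod_LIMSEQ[OF convergent_prod_qpoch[OF assms]]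
    by (simp add: qpoch_def qpoch_inf_def lessThan_Suc_atMost)
  then show ?thesis
    by (rule LIMSEQ_imp_Suc)
qed

lemma qpoch_inf_shift:
  assumes "norm q < 1"
  shows "qpoch_inf a q = (1 - a) * qpoch_inf (a * q) q"
proof -
  have "(\<lambda>n. qpoch a q (Suc n)) \<longlonglongrightarrow> (1 - a) * qpoch_inf (a * q) q"
    unfolding qpoch_Suc_shift by (intro tendsto_mult tendsto_const qpoch_tendsto_qpoch_inf assms)
  moreover have "(\<lambda>n. qpoch a q (Suc n)) \<longlonglongrightarrow> qpoch_inf a q"
    by (rule LIMSEQ_Suc[OF qpoch_tendsto_qpoch_inf[OF assms]])
  ultimately show ?thesis
    by (rule LIMSEQ_unique[rotated])
qed

lemma one_minus_power_nonzero:
  fixes q :: "'a :: real_normed_div_algebra"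
  assumes "norm q < 1" "n > 0"
  shows "1 - q ^ n \<noteq> 0"
proof
  assume "1 - q ^ n = 0"
  then have "norm (q ^ n) = 1"
    by simp
  moreover have "norm (q ^ n) < 1"
    using assms by (simp add: norm_power power_less_one_iff)
  ultimately show False
    by simp
qed

lemma qpoch_qq_nonzero:
  assumes "norm q < 1"
  shows "qpoch q q n \<noteq> 0"
  using one_minus_power_nonzero[OF assms, of "Suc _"] by (simp add: qpoch_def)

lemma qpoch_inf_qq_nonzero:
  assumes "norm q < 1"
  shows "qpoch_inf q q \<noteq> 0"
  unfolding qpoch_inf_def using one_minus_power_nonzero[OF assms, of "Suc _"]
  by (intro prodinf_nonzero convergent_prod_qpoch assms) simp

definition qexp :: "complex \<Rightarrow> complex \<Rightarrow> complex" where
  "qexp q z = (\<Sum>m. z ^ m / qpoch q q m)"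

lemma summable_qexp:
  assumes "norm q < 1" "norm z < 1"
  shows "summable (\<lambda>m. z ^ m / qpoch q q m)"
proof -
  have "(\<lambda>n. inverse (qpoch q q n)) \<longlonglongrightarrow> inverse (qpoch_inf q q)"
    by (intro tendsto_inverse qpoch_tendsto_qpoch_inf qpoch_inf_qq_nonzero assms)
  then have "Bseq (\<lambda>n. inverse (qpoch q q n))"
    by (intro convergent_imp_Bseq convergentI)
  then obtain M where M: "\<And>n. norm (inverse (qpoch q q n)) \<le> M"
    by (auto simp: Bseq_def)
  have summable_majorant: "summable (\<lambda>m. M * norm z ^ m)"
    using assms by (intro summable_mult summable_geometric) simp
  have majorant: "norm (z ^ m / qpoch q q m) \<le> M * norm z ^ m" for m
  proof -
    have "norm (z ^ m / qpoch q q m) = norm (inverse (qpoch q q m)) * norm z ^ m"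
      by (simp add: divide_inverse norm_mult norm_power)
    also have "\<dots> \<le> M * norm z ^ m"
      by (intro mult_right_mono M) simp
    finally show ?thesis .
  qed
  show ?thesis
    by (rule summable_comparison_test'[OF summable_majorant majorant])
qed

lemma qexp_mult_q:
  assumes "norm q < 1" "norm z < 1"
  shows "qexp q (q * z) = (1 - z) * qexp q z"
proof -
  define d where "d m = z ^ m / qpoch q q m - (q * z) ^ m / qpoch q q m" for m
  have "norm (q * z) \<le> norm z"
    using assms by (simp add: norm_mult mult_left_le_one_le)
  then have "d sums (qexp q z - qexp q (q * z))"
    unfolding d_def qexp_def using assms by (intro sums_diff summable_sums summable_qexp) auto
  moreover have "d sums (z * qexp q z)"
  proof -
    have "d (Suc m) = z * (z ^ m / qpoch q q m)" for m
    proof -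
      have "d (Suc m) = z ^ Suc m * (1 - q ^ Suc m) / (qpoch q q m * (1 - q ^ Suc m))"
        by (simp add: d_def qpoch_Suc power_mult_distrib diff_divide_distrib algebra_simps)
      then show ?thesis
        using one_minus_power_nonzero[OF assms(1), of "Suc m"] by simp
    qed
    moreover have "(\<lambda>m. z * (z ^ m / qpoch q q m)) sums (z * qexp q z)"
      unfolding qexp_def by (intro sums_mult summable_sums summable_qexp assms)
    ultimately have "(\<lambda>m. d (Suc m)) sums (z * qexp q z)"
      by simp
    moreover have "d 0 = 0"
      by (simp add: d_def)
    ultimately show ?thesis
      by (simp add: sums_Suc_iff)
  qed
  ultimately have "qexp q z - qexp q (q * z) = z * qexp q z"
    by (rule sums_unique2)
  then show ?thesis
    by (simp add: algebra_simps)
qed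

lemma qexp_mult_power_q:
  assumes "norm q < 1" "norm z < 1"
  shows "qexp q (q ^ k * z) = qpoch z q k * qexp q z"
proof (induction k)
  case 0
  then show ?case
    by (simp add: qpoch_def)
next
  case (Suc k)
  have "norm (q ^ k * z) \<le> norm z"
    using assms by (simp add: norm_mult norm_power mult_left_le_one_le power_le_one)
  then have "norm (q ^ k * z) < 1"
    using assms(2) by simp
  then have "qexp q (q ^ Suc k * z) = (1 - q ^ k * z) * qexp q (q ^ k * z)"
    using qexp_mult_q[OF assms(1)] by (simp add: mult.assoc)
  then show ?case
    using Suc by (simp add: qpoch_Suc algebra_simps)
qed

lemma isCont_qexp_0:
  assumes "norm q < 1"
  shows "isCont (qexp q) 0"
proof -
  have "norm (inverse 2 :: complex) < 1"
    by simp
  then have "summable (\<lambda>m. inverse (qpoch q q m) * inverse 2 ^ m)"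
    using summable_qexp[OF assms] by (simp only: divide_inverse_commute)
  then have "isCont (\<lambda>z. \<Sum>m. inverse (qpoch q q m) * z ^ m) 0"
    by (rule isCont_powser) simp
  then show ?thesis
    unfolding qexp_def[abs_def] by (simp only: divide_inverse_commute)
qed

lemma qexp_0: "qexp q 0 = 1"
  by (simp only: qexp_def divide_inverse_commute powser_zero) (simp add: qpoch_def)

theorem euler_qexp:
  assumes "norm q < 1" "norm z < 1"
  shows "qexp q z = 1 / qpoch_inf z q"
proof -
  have "(\<lambda>k. q ^ k * z) \<longlonglongrightarrow> 0"
    using assms(1) by (intro tendsto_mult_left_zero LIMSEQ_power_zero) simp
  then have "(\<lambda>k. qexp q (q ^ k * z)) \<longlonglongrightarrow> 1"
    using isCont_tendsto_compose[OF isCont_qexp_0[OF assms(1)]] by (simp add: qexp_0)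
  moreover have "(\<lambda>k. qexp q (q ^ k * z)) \<longlonglongrightarrow> qpoch_inf z q * qexp q z"
    unfolding qexp_mult_power_q[OF assms]
    by (intro tendsto_mult tendsto_const qpoch_tendsto_qpoch_inf assms)
  ultimately have "qpoch_inf z q * qexp q z = 1"
    by (rule LIMSEQ_unique[rotated])
  moreover from this have "qpoch_inf z q \<noteq> 0"
    by auto
  ultimately show ?thesis
    by (simp add: field_simps)
qed

lemma qpoch_recurrence_solution:
  assumes "\<And>m. qpoch q q m \<noteq> 0"
    and rec: "\<And>n. x (Suc n) = (1 - q ^ n) * x n + f n"
  shows "x (Suc n) = qpoch q q n * (\<Sum>m\<le>n. f m / qpoch q q m)"
  \<comment> \<open>\<open>x 0\<close> drops out because its coefficient \<open>1 - q ^ 0\<close> vanishes.\<close>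
proof (induction n)
  case 0
  then show ?case
    using rec[of 0] by (simp add: qpoch_def)
next
  case (Suc n)
  then have "x (Suc (Suc n)) = (1 - q ^ Suc n) * qpoch q q n * (\<Sum>m\<le>n. f m / qpoch q q m) + f (Suc n)"
    using rec by simp
  then show ?case
    using assms(1)[of "Suc n"] by (simp add: qpoch_Suc distrib_left mult_ac)
qed

lemma aseq_plus_tail_recurrence:
  assumes "b \<noteq> 1"
  shows "aseq b q (Suc n) + b ^ (Suc n + 1) / (1 - b)
    = (1 - q ^ n) * (aseq b q n + b ^ (n + 1) / (1 - b)) + b / (1 - b) * (b * q) ^ n"
proof -
  have "1 - b \<noteq> 0"
    using assms by simp
  then have "b ^ Suc n + b ^ (Suc n + 1) / (1 - b) = b ^ Suc n / (1 - b)"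
    by (simp add: divide_simps) (simp add: algebra_simps)
  then show ?thesis
    by (simp add: algebra_simps power_mult_distrib add_divide_distrib diff_divide_distrib)
qed

lemma aseq_plus_tail_tendsto:
  assumes "b \<noteq> 1" "norm q < 1" "norm (b * q) < 1"
  shows "(\<lambda>n. aseq b q n + b ^ (n + 1) / (1 - b)) \<longlonglongrightarrow> b * qpoch_inf q q / qpoch_inf b q"
proof -
  let ?c = "\<lambda>n. aseq b q n + b ^ (n + 1) / (1 - b)"
  have "?c (Suc n) = (1 - q ^ n) * ?c n + b / (1 - b) * (b * q) ^ n" for n
    by (rule aseq_plus_tail_recurrence[OF assms(1)])
  then have "?c (Suc n) = qpoch q q n * (\<Sum>m\<le>n. b / (1 - b) * (b * q) ^ m / qpoch q q m)" for n
    by (rule qpoch_recurrence_solution[where x = ?c and f = "\<lambda>n. b / (1 - b) * (b * q) ^ n",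
          OF qpoch_qq_nonzero[OF assms(2)]])
  then have "?c (Suc n) = qpoch q q n * (b / (1 - b) * (\<Sum>m\<le>n. (b * q) ^ m / qpoch q q m))" for n
    by (simp only: times_divide_eq_right[symmetric] sum_distrib_left)
  moreover have "(\<lambda>n. \<Sum>m\<le>n. (b * q) ^ m / qpoch q q m) \<longlonglongrightarrow> qexp q (b * q)"
    unfolding qexp_def using assms by (intro summable_LIMSEQ' summable_qexp)
  ultimately have "(\<lambda>n. ?c (Suc n)) \<longlonglongrightarrow> qpoch_inf q q * (b / (1 - b) * qexp q (b * q))"
    using assms(2) by (simp only:) (intro tendsto_mult tendsto_const qpoch_tendsto_qpoch_inf)
  moreover have "qpoch_inf q q * (b / (1 - b) * qexp q (b * q)) = b * qpoch_inf q q / qpoch_inf b q"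
    unfolding euler_qexp[OF assms(2,3)] qpoch_inf_shift[OF assms(2), of b] by simp
  ultimately have "(\<lambda>n. ?c (Suc n)) \<longlonglongrightarrow> b * qpoch_inf q q / qpoch_inf b q"
    by (simp only:)
  then show ?thesis
    by (rule LIMSEQ_imp_Suc)
qed

theorem theorem1p2:
  fixes b q :: complex
  assumes "b \<noteq> 1"
    and "norm q < 1"
    and "b \<noteq> 0 \<Longrightarrow> norm q < 1 / norm b"
  shows "((\<lambda>n. (\<Sum>l=1..n. b ^ l) - aseq b q n)
           \<longlonglongrightarrow> b / (1 - b) - b * qpoch_inf q q / qpoch_inf b q)
       \<and> ((\<lambda>n. (b - b ^ (n + 1)) / (1 - b) - aseq b q n)
           \<longlonglongrightarrow> b / (1 - b) - b * qpoch_inf q q / qpoch_inf b q)"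
proof -
  have "norm (b * q) < 1"
    using assms(3) by (cases "b = 0") (simp_all add: norm_mult field_simps)
  then have "(\<lambda>n. b / (1 - b) - (aseq b q n + b ^ (n + 1) / (1 - b)))
      \<longlonglongrightarrow> b / (1 - b) - b * qpoch_inf q q / qpoch_inf b q"
    using assms by (intro tendsto_diff tendsto_const aseq_plus_tail_tendsto)
  moreover have "(b - b ^ (n + 1)) / (1 - b) - aseq b q n
      = b / (1 - b) - (aseq b q n + b ^ (n + 1) / (1 - b))" for n
    by (simp add: diff_divide_distrib)
  moreover have "(\<Sum>l=1..n. b ^ l) = (b - b ^ (n + 1)) / (1 - b)" for n
    using assms(1) by (simp add: sum_gp)
  ultimately show ?thesis
    by (simp only:)
qed

end
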